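(* Let $\mathcal{U}=\{u_1,\ldots,u_M\}\subset\mathbb{R}\setminus\{0\}$ be a fixed finite set of $M\ge 1$ distinct nonzero reals, $u_{\min}=\min_{m}|u_m|$, and let $\sigma^2>0$ be fixed. For integers $N>k\ge 1$, let $x$ be uniformly distributed on $\mathcal{X}_k^N(\mathcal{U})$ and $y=x+\omega$ with $\omega\sim\mathcal{N}(0,\sigma_{N/k}^2 I_N)$ independent of $x$, where $\sigma_{N/k}^2=\sigma^2/\log(N/k)$. Let $\hat{x}_{\mathrm{ML}}\in\mathcal{X}_k^N(\mathcal{U})$ be the maximum likelihood estimator of $x$ based on $y$, i.e. $\hat{x}_{\mathrm{ML}}\in\operatorname{argmax}_{x'\in\mathcal{X}_k^N(\mathcal{U})}p(y\mid x')$. If $\sigma^2<u_{\min}^2/2$, then $k^{-1}\mathbb{E}[\|x-\hat{x}_{\mathrm{ML}}\|_2^2]\to 0$ as $k,N\to\infty$ with $\log k/\log N\to\gamma$ for some $\gamma\in[0,1)$.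
   Context: For $v\in\mathbb{R}^N$, $\mathcal{S}_v=\{n\in\{1,\ldots,N\}: v_n\neq 0\}$ is its support. $\mathcal{X}_k^N(\mathcal{U})$ denotes the set of vectors $x\in\mathbb{R}^N$ with $|\mathcal{S}_x|=k$ and $x_n\in\mathcal{U}$ for all $n\in\mathcal{S}_x$. Here $p(y\mid x')$ is the Gaussian density $(2\pi\sigma_{N/k}^2)^{-N/2}\exp(-\|y-x'\|_2^2/(2\sigma_{N/k}^2))$. The expectation is over $x$ and $\omega$. *)

theory Defs
  imports "HOL-Probability.Probability"
begin

text \<open>Vectors in R^N are represented as functions nat => real, coordinates 0..N-1,
  required to vanish outside {..<N}.\<close>

definition sqnorm :: "nat \<Rightarrow> (nat \<Rightarrow> real) \<Rightarrow> real" where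
  "sqnorm N v = (\<Sum>n<N. (v n)\<^sup>2)"

definition supp :: "nat \<Rightarrow> (nat \<Rightarrow> real) \<Rightarrow> nat set" where
  "supp N v = {n \<in> {..<N}. v n \<noteq> 0}"

definition Xset :: "real set \<Rightarrow> nat \<Rightarrow> nat \<Rightarrow> (nat \<Rightarrow> real) set" where
  "Xset U k N = {x. (\<forall>n\<ge>N. x n = 0) \<and> card (supp N x) = k \<and> (\<forall>n\<in>supp N x. x n \<in> U)}"

definition noise_var :: "real \<Rightarrow> nat \<Rightarrow> nat \<Rightarrow> real" where
  "noise_var s2 k N = s2 / ln (real N / real k)"

definition lik :: "real \<Rightarrow> nat \<Rightarrow> (nat \<Rightarrow> real) \<Rightarrow> (nat \<Rightarrow> real) \<Rightarrow> real" where
  "lik v N y x' = (2 * pi * v) powr (- real N / 2) * exp (- sqnorm N (\<lambda>n. y n - x' n) / (2 * v))"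

definition gauss_noise :: "real \<Rightarrow> nat \<Rightarrow> (nat \<Rightarrow> real) measure" where
  "gauss_noise v N = PiM {..<N} (\<lambda>_. density lborel (normal_density 0 (sqrt v)))"

definition mse :: "real set \<Rightarrow> real \<Rightarrow> nat \<Rightarrow> nat \<Rightarrow> ((nat \<Rightarrow> real) \<Rightarrow> (nat \<Rightarrow> real)) \<Rightarrow> real" where
  "mse U s2 k N est =
     (\<Sum>x\<in>Xset U k N. \<integral>\<omega>. sqnorm N (\<lambda>n. x n - est (\<lambda>i. x i + \<omega> i) n)
        \<partial>(gauss_noise (noise_var s2 k N) N)) / real (card (Xset U k N))"

definition is_ML_est :: "real set \<Rightarrow> real \<Rightarrow> nat \<Rightarrow> nat \<Rightarrow> ((nat \<Rightarrow> real) \<Rightarrow> (nat \<Rightarrow> real)) \<Rightarrow> bool" where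
  "is_ML_est U s2 k N est \<longleftrightarrow>
     (\<forall>y. est y \<in> Xset U k N \<and>
          (\<forall>x'\<in>Xset U k N. lik (noise_var s2 k N) N y x' \<le> lik (noise_var s2 k N) N y (est y)))"

end

theory Submission
  imports Defs
begin

text \<open>Let z be the ML estimate of x from y = x + w. Since z maximises the likelihood,
  |x + w - z|^2 \<le> |w|^2, i.e. the coordinate sum of (z_n - x_n)^2 - 2 (z_n - x_n) w_n is
  nonpositive. On a coordinate whose noise stays below a threshold (t off the support of x, r on
  it) every error raises this sum: a false alarm by at least d^2 - 2 d t, a miss by at least
  d^2 - 2 d r, a wrong nonzero value by at least \<delta>^2 / 2, where d = u_min and \<delta> separates the
  points of U. Since x and z both have k nonzeros, false alarms and misses come in pairs, each
  gaining 2 d (d - t - r) > 0. A coordinate whose noise exceeds its threshold is charged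
  exp (w_n^2); hence |x - z|^2 \<le> C \<Sum>_n exp (w_n^2) 1{|w_n| > \<tau>_n}.
  By a Chernoff bound the expectation of the right-hand side is of order
  N exp (- \<theta> t^2 / (2 v)) + k exp (- \<theta> r^2 / (2 v)) with v = \<sigma>^2 / L, L = ln (N / k).
  Dividing by k = N exp (- L) leaves exp (- (\<theta> t^2 / (2 \<sigma>^2) - 1) L) + exp (- \<theta> r^2 L / (2 \<sigma>^2)).
  One can take t < u_min and \<theta> < 1 with \<theta> t^2 > 2 \<sigma>^2 precisely because 2 \<sigma>^2 < u_min^2,
  so both terms vanish as L \<rightarrow> \<infinity>; and L \<rightarrow> \<infinity> because ln k / ln N \<rightarrow> \<gamma> < 1.\<close>

section \<open>Gaussian tail weights\<close>

abbreviation centered_normal :: "real \<Rightarrow> real measure" where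
  "centered_normal v \<equiv> density lborel (normal_density 0 (sqrt v))"

lemma normal_density_mult_exp_square:
  fixes v l z :: real
  assumes v: "0 < v" and l: "2 * l * v < 1"
  shows "normal_density 0 (sqrt v) z * exp (l * z\<^sup>2) =
    normal_density 0 (sqrt (v / (1 - 2 * l * v))) z / sqrt (1 - 2 * l * v)"
proof -
  define c where "c = 1 - 2 * l * v"
  have c: "0 < c" using l by (simp add: c_def)
  have "normal_density 0 (sqrt v) z * exp (l * z\<^sup>2) = exp (- z\<^sup>2 / (2 * v) + l * z\<^sup>2) / sqrt (2 * pi * v)"
    using v by (simp add: normal_density_def mult_exp_exp)
  also have "- z\<^sup>2 / (2 * v) + l * z\<^sup>2 = - z\<^sup>2 / (2 * (v / c))"
    using v c by (simp add: c_def field_simps)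
  also have "sqrt (2 * pi * v) = sqrt c * sqrt (2 * pi * (v / c))"
    using v c by (simp add: real_sqrt_mult[symmetric])
  finally show ?thesis
    using v c by (simp add: normal_density_def c_def)
qed

lemma normal_exp_square_moment:
  fixes v l :: real
  assumes v: "0 < v" and l: "2 * l * v < 1"
  shows "integrable lborel (\<lambda>z. normal_density 0 (sqrt v) z * exp (l * z\<^sup>2))"
    and "(\<integral>z. normal_density 0 (sqrt v) z * exp (l * z\<^sup>2) \<partial>lborel) = 1 / sqrt (1 - 2 * l * v)"
  using v l by (simp_all add: normal_density_mult_exp_square)

text \<open>Since \<open>exp (w\<^sup>2) \<ge> 1 + w\<^sup>2\<close>, this weight pays for the worst residual change \<open>- w\<^sup>2\<close> on a
  coordinate whose noise exceeds the threshold \<open>\<tau>\<close>.\<close>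
definition tail_exp :: "real \<Rightarrow> real \<Rightarrow> real" where
  "tail_exp \<tau> w = (if \<tau> < \<bar>w\<bar> then exp (w\<^sup>2) else 0)"

lemma tail_exp_nonneg: "0 \<le> tail_exp \<tau> w"
  by (simp add: tail_exp_def)

lemma borel_measurable_tail_exp [measurable]: "tail_exp \<tau> \<in> borel_measurable borel"
  unfolding tail_exp_def by measurable

lemma integrable_tail_exp:
  assumes "0 < v" and "2 * v < 1"
  shows "integrable (centered_normal v) (tail_exp \<tau>)"
proof -
  have "integrable lborel (\<lambda>z. normal_density 0 (sqrt v) z * tail_exp \<tau> z)"
    by (rule Bochner_Integration.integrable_bound[OF normal_exp_square_moment(1)[of v 1]])
       (use assms in \<open>auto simp: tail_exp_def\<close>)
  then show ?thesis
    by (simp add: integrable_density)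
qed

text \<open>Chernoff: \<open>1{\<tau> < |w|} \<le> exp (\<theta> (w\<^sup>2 - \<tau>\<^sup>2) / (2 v))\<close>.\<close>
lemma tail_exp_expectation_le:
  assumes v: "0 < v" and \<theta>: "0 < \<theta>" "\<theta> + 2 * v < 1" and \<tau>: "0 \<le> \<tau>"
  shows "integral\<^sup>L (centered_normal v) (tail_exp \<tau>) \<le> exp (- \<theta> * \<tau>\<^sup>2 / (2 * v)) / sqrt (1 - \<theta> - 2 * v)"
proof -
  define l where "l = 1 + \<theta> / (2 * v)"
  have l: "2 * l * v = \<theta> + 2 * v"
    using v by (simp add: l_def field_simps)
  define g where "g = (\<lambda>z. exp (- \<theta> * \<tau>\<^sup>2 / (2 * v)) * (normal_density 0 (sqrt v) z * exp (l * z\<^sup>2)))"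
  have tail_le: "normal_density 0 (sqrt v) z * tail_exp \<tau> z \<le> g z" for z
  proof (cases "\<tau> < \<bar>z\<bar>")
    case True
    then have "\<tau>\<^sup>2 \<le> z\<^sup>2"
      using \<tau> by (metis abs_le_square_iff abs_of_nonneg less_imp_le)
    then have "z\<^sup>2 \<le> - \<theta> * \<tau>\<^sup>2 / (2 * v) + l * z\<^sup>2"
      using v \<theta> by (simp add: l_def field_simps mult_left_mono)
    then have "exp (z\<^sup>2) \<le> exp (- \<theta> * \<tau>\<^sup>2 / (2 * v)) * exp (l * z\<^sup>2)"
      by (simp flip: exp_add)
    then show ?thesis
      using True by (simp add: g_def tail_exp_def mult_left_mono mult.left_commute)
  qed (simp add: g_def tail_exp_def)
  have "integral\<^sup>L (centered_normal v) (tail_exp \<tau>)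
      = (\<integral>z. normal_density 0 (sqrt v) z * tail_exp \<tau> z \<partial>lborel)"
    by (simp add: integral_density)
  also have "\<dots> \<le> integral\<^sup>L lborel g"
    using tail_le normal_exp_square_moment(1)[of v l] v \<theta> l
    by (intro integral_mono') (auto simp: g_def)
  also have "\<dots> = exp (- \<theta> * \<tau>\<^sup>2 / (2 * v)) / sqrt (1 - \<theta> - 2 * v)"
    using normal_exp_square_moment(2)[of v l] v \<theta> l by (simp add: g_def diff_diff_eq)
  finally show ?thesis .
qed

lemma PiM_integral_sum_components:
  fixes f :: "'i \<Rightarrow> 'a \<Rightarrow> real"
  assumes M: "prob_space M" and f: "\<And>i. i \<in> I \<Longrightarrow> integrable M (f i)"
  shows "integrable (PiM I (\<lambda>_. M)) (\<lambda>\<omega>. \<Sum>i\<in>I. f i (\<omega> i))"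
    and "(\<integral>\<omega>. (\<Sum>i\<in>I. f i (\<omega> i)) \<partial>PiM I (\<lambda>_. M)) = (\<Sum>i\<in>I. integral\<^sup>L M (f i))"
proof -
  have component: "integrable (PiM I (\<lambda>_. M)) (\<lambda>\<omega>. f i (\<omega> i)) \<and>
      (\<integral>\<omega>. f i (\<omega> i) \<partial>PiM I (\<lambda>_. M)) = integral\<^sup>L M (f i)" if i: "i \<in> I" for i
  proof -
    have distr: "distr (PiM I (\<lambda>_. M)) M (\<lambda>\<omega>. \<omega> i) = M"
      using distr_PiM_component[of I "\<lambda>_. M" i] M i by simp
    have meas: "(\<lambda>\<omega>. \<omega> i) \<in> measurable (PiM I (\<lambda>_. M)) M"
      using i by (rule measurable_component_singleton)
    show ?thesis
      using integrable_distr_eq[OF meas, of "f i"] integral_distr[OF meas, of "f i"] f[OF i]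
      by (simp add: distr)
  qed
  then show "integrable (PiM I (\<lambda>_. M)) (\<lambda>\<omega>. \<Sum>i\<in>I. f i (\<omega> i))"
    by (intro Bochner_Integration.integrable_sum) simp
  from component show "(\<integral>\<omega>. (\<Sum>i\<in>I. f i (\<omega> i)) \<partial>PiM I (\<lambda>_. M)) = (\<Sum>i\<in>I. integral\<^sup>L M (f i))"
    by (subst Bochner_Integration.integral_sum) simp_all
qed

section \<open>Distortion of a maximum-likelihood decision\<close>

lemma lik_le_iff_sqnorm_ge:
  assumes "0 < v"
  shows "lik v N y a \<le> lik v N y b \<longleftrightarrow> sqnorm N (\<lambda>n. y n - b n) \<le> sqnorm N (\<lambda>n. y n - a n)"
  using assms by (simp add: lik_def divide_le_cancel)

lemma residual_increase_ge:
  fixes a b w \<tau> R K :: real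
  assumes small_noise: "\<bar>w\<bar> \<le> \<tau> \<Longrightarrow> R \<le> (b - a)\<^sup>2 - 2 * \<bar>b - a\<bar> * \<tau>"
    and "R \<le> K" and "1 \<le> K"
  shows "R - K * tail_exp \<tau> w \<le> (b - a)\<^sup>2 - 2 * (b - a) * w"
proof (cases "\<tau> < \<bar>w\<bar>")
  case True
  have "K + K * w\<^sup>2 \<le> K * tail_exp \<tau> w"
    using True mult_left_mono[OF exp_ge_add_one_self[of "w\<^sup>2"], of K] \<open>1 \<le> K\<close>
    by (simp add: tail_exp_def distrib_left)
  moreover have "w\<^sup>2 \<le> K * w\<^sup>2"
    using \<open>1 \<le> K\<close> by (simp add: mult_le_cancel_right1)
  moreover have "(b - a)\<^sup>2 - 2 * (b - a) * w = (b - a - w)\<^sup>2 - w\<^sup>2"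
    by (simp add: power2_eq_square algebra_simps)
  ultimately show ?thesis
    using \<open>R \<le> K\<close> zero_le_power2[of "b - a - w"] by linarith
next
  case False
  have "(b - a) * w \<le> \<bar>b - a\<bar> * \<bar>w\<bar>"
    by (simp add: abs_mult[symmetric])
  also have "\<dots> \<le> \<bar>b - a\<bar> * \<tau>"
    using False by (intro mult_left_mono) simp_all
  finally have "(b - a) * w \<le> \<bar>b - a\<bar> * \<tau>" .
  moreover have "tail_exp \<tau> w = 0"
    using False by (simp add: tail_exp_def)
  ultimately show ?thesis
    using False small_noise by (simp add: algebra_simps)
qed

lemma coordinate_residual_increase_ge:
  fixes a b w d \<delta> t r :: real
  assumes a: "a \<noteq> 0 \<Longrightarrow> a \<in> U" and b: "b \<noteq> 0 \<Longrightarrow> b \<in> U"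
    and min_abs: "\<And>u. u \<in> U \<Longrightarrow> d \<le> \<bar>u\<bar>"
    and separated: "\<And>u u'. u \<in> U \<Longrightarrow> u' \<in> U \<Longrightarrow> u \<noteq> u' \<Longrightarrow> \<delta> \<le> \<bar>u - u'\<bar>"
    and r: "0 \<le> r" "4 * r \<le> \<delta>" and t: "0 \<le> t" "t + r < d"
  shows "(if a = 0 \<and> b \<noteq> 0 then d\<^sup>2 - 2 * d * t else 0)
      + (if a \<noteq> 0 \<and> b = 0 then d\<^sup>2 - 2 * d * r else 0)
      + (if a \<noteq> 0 \<and> b \<noteq> 0 \<and> a \<noteq> b then \<delta>\<^sup>2 / 2 else 0)
      - (d\<^sup>2 + \<delta>\<^sup>2 + 1) * tail_exp (if a = 0 then t else r) w
    \<le> (b - a)\<^sup>2 - 2 * (b - a) * w"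
proof (rule residual_increase_ge)
  let ?s = "\<bar>b - a\<bar>"
  have far_from_zero: "d\<^sup>2 - 2 * d * \<tau> \<le> ?s\<^sup>2 - 2 * ?s * \<tau>" if "d \<le> ?s" "\<tau> \<le> d" for \<tau>
  proof -
    have "0 \<le> (?s - d) * (?s + d - 2 * \<tau>)"
      using that by simp
    then show ?thesis
      by (simp add: power2_eq_square algebra_simps)
  qed
  assume "\<bar>w\<bar> \<le> (if a = 0 then t else r)"
  consider "a = 0" "b \<noteq> 0" | "a \<noteq> 0" "b = 0" | "a \<noteq> 0" "b \<noteq> 0" "a \<noteq> b" | "a = b"
    by blast
  then show "(if a = 0 \<and> b \<noteq> 0 then d\<^sup>2 - 2 * d * t else 0)
      + (if a \<noteq> 0 \<and> b = 0 then d\<^sup>2 - 2 * d * r else 0)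
      + (if a \<noteq> 0 \<and> b \<noteq> 0 \<and> a \<noteq> b then \<delta>\<^sup>2 / 2 else 0)
    \<le> (b - a)\<^sup>2 - 2 * ?s * (if a = 0 then t else r)"
  proof cases
    case 1
    then show ?thesis
      using far_from_zero[of t] min_abs[of b] b t r by simp
  next
    case 2
    then show ?thesis
      using far_from_zero[of r] min_abs[of a] a t r by simp
  next
    case 3
    then have "\<delta> \<le> ?s"
      using separated[of b a] a b by simp
    then have "\<delta> * (\<delta> / 2) \<le> ?s * (?s - 2 * r)"
      using r by (intro mult_mono) auto
    then show ?thesis
      using 3 by (simp add: power2_eq_square algebra_simps)
  qed simp
next
  show "(if a = 0 \<and> b \<noteq> 0 then d\<^sup>2 - 2 * d * t else 0)
      + (if a \<noteq> 0 \<and> b = 0 then d\<^sup>2 - 2 * d * r else 0)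
      + (if a \<noteq> 0 \<and> b \<noteq> 0 \<and> a \<noteq> b then \<delta>\<^sup>2 / 2 else 0) \<le> d\<^sup>2 + \<delta>\<^sup>2 + 1"
  proof -
    have "0 \<le> 2 * d * t" "0 \<le> 2 * d * r" "0 \<le> \<delta>\<^sup>2" "0 \<le> d\<^sup>2"
      using t r by simp_all
    then show ?thesis
      by (simp only: split: if_split) linarith
  qed
qed simp

lemma coordinate_sq_diff_le:
  fixes a b D :: real
  assumes a: "a \<noteq> 0 \<Longrightarrow> a \<in> U" and b: "b \<noteq> 0 \<Longrightarrow> b \<in> U"
    and max_abs: "\<And>u. u \<in> U \<Longrightarrow> \<bar>u\<bar> \<le> D"
  shows "(a - b)\<^sup>2 \<le> (if a = 0 \<and> b \<noteq> 0 then D\<^sup>2 else 0)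
    + (if a \<noteq> 0 \<and> b = 0 then D\<^sup>2 else 0)
    + (if a \<noteq> 0 \<and> b \<noteq> 0 \<and> a \<noteq> b then 4 * D\<^sup>2 else 0)"
proof -
  have "\<bar>a\<bar> \<le> D" if "a \<noteq> 0" using a max_abs that by blast
  moreover have "\<bar>b\<bar> \<le> D" if "b \<noteq> 0" using b max_abs that by blast
  ultimately have "\<bar>a - b\<bar> \<le> (if a = b then 0 else if a = 0 \<or> b = 0 then D else 2 * D)"
    by auto
  then have "\<bar>a - b\<bar>\<^sup>2 \<le> (if a = b then 0 else if a = 0 \<or> b = 0 then D else 2 * D)\<^sup>2"
    by (rule power_mono) simp
  then show ?thesis
    by (auto simp: power_mult_distrib)
qed

definition false_alarms :: "nat \<Rightarrow> (nat \<Rightarrow> real) \<Rightarrow> (nat \<Rightarrow> real) \<Rightarrow> nat set" where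
  "false_alarms N x z = {n \<in> {..<N}. x n = 0 \<and> z n \<noteq> 0}"

definition misses :: "nat \<Rightarrow> (nat \<Rightarrow> real) \<Rightarrow> (nat \<Rightarrow> real) \<Rightarrow> nat set" where
  "misses N x z = {n \<in> {..<N}. x n \<noteq> 0 \<and> z n = 0}"

definition value_errors :: "nat \<Rightarrow> (nat \<Rightarrow> real) \<Rightarrow> (nat \<Rightarrow> real) \<Rightarrow> nat set" where
  "value_errors N x z = {n \<in> {..<N}. x n \<noteq> 0 \<and> z n \<noteq> 0 \<and> x n \<noteq> z n}"

lemma Xset_nonzero_mem: "x \<in> Xset U k N \<Longrightarrow> x n \<noteq> 0 \<Longrightarrow> x n \<in> U"
  unfolding Xset_def supp_def by (cases "n < N") auto

lemma card_false_alarms_eq_card_misses: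
  assumes "x \<in> Xset U k N" and "z \<in> Xset U k N"
  shows "card (false_alarms N x z) = card (misses N x z)"
proof -
  have "false_alarms N x z = supp N z - supp N x" "misses N x z = supp N x - supp N z"
    by (auto simp: false_alarms_def misses_def supp_def)
  moreover have "card (supp N x) = k" "card (supp N z) = k"
    using assms by (simp_all add: Xset_def)
  moreover have "finite (supp N x)" "finite (supp N z)"
    by (simp_all add: supp_def)
  ultimately show ?thesis
    by (simp add: card_Diff_subset_Int Int_commute)
qed

lemma sum_residual_increase_ge:
  fixes d \<delta> t r :: real
  assumes x: "x \<in> Xset U k N" and z: "z \<in> Xset U k N"
    and min_abs: "\<And>u. u \<in> U \<Longrightarrow> d \<le> \<bar>u\<bar>"
    and separated: "\<And>u u'. u \<in> U \<Longrightarrow> u' \<in> U \<Longrightarrow> u \<noteq> u' \<Longrightarrow> \<delta> \<le> \<bar>u - u'\<bar>"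
    and r: "0 \<le> r" "4 * r \<le> \<delta>" and t: "0 \<le> t" "t + r < d"
  shows "real (card (false_alarms N x z)) * (d\<^sup>2 - 2 * d * t)
      + real (card (misses N x z)) * (d\<^sup>2 - 2 * d * r)
      + real (card (value_errors N x z)) * (\<delta>\<^sup>2 / 2)
      - (d\<^sup>2 + \<delta>\<^sup>2 + 1) * (\<Sum>n<N. tail_exp (if x n = 0 then t else r) (w n))
    \<le> sqnorm N (\<lambda>n. x n + w n - z n) - sqnorm N w"
proof -
  have "real (card (false_alarms N x z)) * (d\<^sup>2 - 2 * d * t)
      + real (card (misses N x z)) * (d\<^sup>2 - 2 * d * r)
      + real (card (value_errors N x z)) * (\<delta>\<^sup>2 / 2)
      - (d\<^sup>2 + \<delta>\<^sup>2 + 1) * (\<Sum>n<N. tail_exp (if x n = 0 then t else r) (w n))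
    = (\<Sum>n<N. (if x n = 0 \<and> z n \<noteq> 0 then d\<^sup>2 - 2 * d * t else 0)
      + (if x n \<noteq> 0 \<and> z n = 0 then d\<^sup>2 - 2 * d * r else 0)
      + (if x n \<noteq> 0 \<and> z n \<noteq> 0 \<and> x n \<noteq> z n then \<delta>\<^sup>2 / 2 else 0)
      - (d\<^sup>2 + \<delta>\<^sup>2 + 1) * tail_exp (if x n = 0 then t else r) (w n))"
    by (simp add: sum.distrib sum_subtractf sum_distrib_left sum.inter_filter[symmetric]
        false_alarms_def misses_def value_errors_def)
  also have "\<dots> \<le> (\<Sum>n<N. (z n - x n)\<^sup>2 - 2 * (z n - x n) * w n)"
    by (intro sum_mono coordinate_residual_increase_ge[where U = U])
       (use assms Xset_nonzero_mem in auto)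
  also have "\<dots> = sqnorm N (\<lambda>n. x n + w n - z n) - sqnorm N w"
    by (simp add: sqnorm_def sum_subtractf[symmetric] power2_eq_square algebra_simps)
  finally show ?thesis .
qed

lemma sqnorm_diff_le_error_counts:
  fixes D :: real
  assumes x: "x \<in> Xset U k N" and z: "z \<in> Xset U k N"
    and max_abs: "\<And>u. u \<in> U \<Longrightarrow> \<bar>u\<bar> \<le> D"
  shows "sqnorm N (\<lambda>n. x n - z n) \<le> real (card (false_alarms N x z)) * D\<^sup>2
    + real (card (misses N x z)) * D\<^sup>2 + real (card (value_errors N x z)) * (4 * D\<^sup>2)"
proof -
  have "sqnorm N (\<lambda>n. x n - z n) \<le> (\<Sum>n<N. (if x n = 0 \<and> z n \<noteq> 0 then D\<^sup>2 else 0)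
      + (if x n \<noteq> 0 \<and> z n = 0 then D\<^sup>2 else 0)
      + (if x n \<noteq> 0 \<and> z n \<noteq> 0 \<and> x n \<noteq> z n then 4 * D\<^sup>2 else 0))"
    unfolding sqnorm_def
    by (intro sum_mono coordinate_sq_diff_le[where U = U]) (use assms Xset_nonzero_mem in auto)
  also have "\<dots> = real (card (false_alarms N x z)) * D\<^sup>2
    + real (card (misses N x z)) * D\<^sup>2 + real (card (value_errors N x z)) * (4 * D\<^sup>2)"
    by (simp add: sum.distrib sum.inter_filter[symmetric] false_alarms_def misses_def value_errors_def)
  finally show ?thesis .
qed

lemma mle_distortion_le_tail_sum:
  fixes d D \<delta> t r :: real
  assumes x: "x \<in> Xset U k N" and z: "z \<in> Xset U k N"
    and min_abs: "\<And>u. u \<in> U \<Longrightarrow> d \<le> \<bar>u\<bar>" and max_abs: "\<And>u. u \<in> U \<Longrightarrow> \<bar>u\<bar> \<le> D"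
    and separated: "\<And>u u'. u \<in> U \<Longrightarrow> u' \<in> U \<Longrightarrow> u \<noteq> u' \<Longrightarrow> \<delta> \<le> \<bar>u - u'\<bar>"
    and \<delta>: "0 < \<delta>" and r: "0 \<le> r" "4 * r \<le> \<delta>" and t: "0 \<le> t" "t + r < d"
    and residual: "sqnorm N (\<lambda>n. x n + w n - z n) \<le> sqnorm N w"
  shows "sqnorm N (\<lambda>n. x n - z n) \<le> (d\<^sup>2 + \<delta>\<^sup>2 + 1) * (D\<^sup>2 / (d * (d - t - r)) + 8 * D\<^sup>2 / \<delta>\<^sup>2)
    * (\<Sum>n<N. tail_exp (if x n = 0 then t else r) (w n))"
proof -
  define K where "K = d\<^sup>2 + \<delta>\<^sup>2 + 1"
  define S where "S = (\<Sum>n<N. tail_exp (if x n = 0 then t else r) (w n))"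
  define m where "m = real (card (false_alarms N x z))"
  define e where "e = real (card (value_errors N x z))"
  define gain where "gain = 2 * d * (d - t - r)"
  have gain: "0 < gain"
    using t r by (simp add: gain_def)
  have m_misses: "real (card (misses N x z)) = m"
    using card_false_alarms_eq_card_misses[OF x z] by (simp add: m_def)
  have "m * (d\<^sup>2 - 2 * d * t) + m * (d\<^sup>2 - 2 * d * r) + e * (\<delta>\<^sup>2 / 2) - K * S \<le> 0"
    using sum_residual_increase_ge[OF x z min_abs separated r t, of w] residual
    unfolding K_def S_def m_def e_def m_misses[unfolded m_def] by linarith
  moreover have "m * (d\<^sup>2 - 2 * d * t) + m * (d\<^sup>2 - 2 * d * r) = m * gain"
    by (simp add: gain_def power2_eq_square algebra_simps)
  ultimately have "m * gain + e * (\<delta>\<^sup>2 / 2) \<le> K * S"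
    by linarith
  moreover have "0 \<le> m * gain" "0 \<le> e * (\<delta>\<^sup>2 / 2)"
    using gain by (simp_all add: m_def e_def)
  ultimately have "m * gain \<le> K * S" "e * (\<delta>\<^sup>2 / 2) \<le> K * S"
    by linarith+
  then have "m \<le> K * S / gain" "e \<le> 2 * K * S / \<delta>\<^sup>2"
    using gain \<delta> by (simp_all add: field_simps)
  have "sqnorm N (\<lambda>n. x n - z n) \<le> 2 * D\<^sup>2 * m + 4 * D\<^sup>2 * e"
    using sqnorm_diff_le_error_counts[OF x z max_abs]
    by (simp add: m_misses flip: m_def e_def) (simp add: algebra_simps)
  also have "\<dots> \<le> 2 * D\<^sup>2 * (K * S / gain) + 4 * D\<^sup>2 * (2 * K * S / \<delta>\<^sup>2)"
    using \<open>m \<le> K * S / gain\<close> \<open>e \<le> 2 * K * S / \<delta>\<^sup>2\<close> by (intro add_mono mult_left_mono) auto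
  also have "\<dots> = K * (D\<^sup>2 / (d * (d - t - r)) + 8 * D\<^sup>2 / \<delta>\<^sup>2) * S"
    using gain by (simp add: gain_def field_simps)
  finally show ?thesis
    by (simp only: K_def S_def)
qed

section \<open>Mean squared error\<close>

lemma mse_nonneg: "0 \<le> mse U s2 k N est"
  unfolding mse_def sqnorm_def by (intro divide_nonneg_nonneg sum_nonneg integral_nonneg_AE AE_I2) auto

lemma mle_residual_le_noise:
  fixes w :: "nat \<Rightarrow> real"
  assumes mle: "is_ML_est U s2 k N est" and v: "0 < noise_var s2 k N" and x: "x \<in> Xset U k N"
  defines "z \<equiv> est (\<lambda>i. x i + w i)"
  shows "z \<in> Xset U k N" and "sqnorm N (\<lambda>n. x n + w n - z n) \<le> sqnorm N w"
proof -
  from mle x show "z \<in> Xset U k N"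
    by (simp add: is_ML_est_def z_def)
  from mle x have "lik (noise_var s2 k N) N (\<lambda>i. x i + w i) x
      \<le> lik (noise_var s2 k N) N (\<lambda>i. x i + w i) z"
    by (simp add: is_ML_est_def z_def)
  then show "sqnorm N (\<lambda>n. x n + w n - z n) \<le> sqnorm N w"
    by (simp add: lik_le_iff_sqnorm_ge[OF v])
qed

lemma mse_le_tail_expectations:
  fixes C t r s2 :: real and k N :: nat
  defines "v \<equiv> noise_var s2 k N"
  assumes v: "0 < v" "2 * v < 1" and C: "0 \<le> C"
    and mle: "is_ML_est U s2 k N est"
    and distortion: "\<And>x z w. x \<in> Xset U k N \<Longrightarrow> z \<in> Xset U k N \<Longrightarrow>
      sqnorm N (\<lambda>n. x n + w n - z n) \<le> sqnorm N w \<Longrightarrow>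
      sqnorm N (\<lambda>n. x n - z n) \<le> C * (\<Sum>n<N. tail_exp (if x n = 0 then t else r) (w n))"
  shows "mse U s2 k N est \<le> C * (real N * integral\<^sup>L (centered_normal v) (tail_exp t)
    + real k * integral\<^sup>L (centered_normal v) (tail_exp r))"
proof -
  define E where "E \<tau> = integral\<^sup>L (centered_normal v) (tail_exp \<tau>)" for \<tau>
  have E_nonneg: "0 \<le> E \<tau>" for \<tau>
    unfolding E_def by (intro integral_nonneg_AE AE_I2 tail_exp_nonneg)
  have bound_nonneg: "0 \<le> C * (real N * E t + real k * E r)"
    using C E_nonneg by simp
  have per_signal: "(\<integral>w. sqnorm N (\<lambda>n. x n - est (\<lambda>i. x i + w i) n) \<partial>gauss_noise v N)
      \<le> C * (real N * E t + real k * E r)" if x: "x \<in> Xset U k N" for x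
  proof -
    define \<tau> where "\<tau> n = (if x n = 0 then t else r)" for n
    have "prob_space (centered_normal v)"
      using v by (simp add: prob_space_normal_density)
    then have tail_sum: "integrable (gauss_noise v N) (\<lambda>w. \<Sum>n<N. tail_exp (\<tau> n) (w n))"
        "(\<integral>w. (\<Sum>n<N. tail_exp (\<tau> n) (w n)) \<partial>gauss_noise v N) = (\<Sum>n<N. E (\<tau> n))"
      using PiM_integral_sum_components[of "centered_normal v" "{..<N}" "\<lambda>n. tail_exp (\<tau> n)"]
        integrable_tail_exp[OF v] by (simp_all add: gauss_noise_def E_def)
    have "(\<integral>w. sqnorm N (\<lambda>n. x n - est (\<lambda>i. x i + w i) n) \<partial>gauss_noise v N)
        \<le> (\<integral>w. C * (\<Sum>n<N. tail_exp (\<tau> n) (w n)) \<partial>gauss_noise v N)"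
      using mle_residual_le_noise[OF mle _ x] v tail_sum(1) C
      by (intro integral_mono')
         (auto simp: \<tau>_def v_def tail_exp_nonneg intro!: distortion[OF x] mult_nonneg_nonneg sum_nonneg)
    also have "\<dots> = C * (\<Sum>n<N. E (\<tau> n))"
      using tail_sum by simp
    also have "(\<Sum>n<N. E (\<tau> n)) \<le> (\<Sum>n<N. E t + (if x n \<noteq> 0 then E r else 0))"
      using E_nonneg by (intro sum_mono) (simp add: \<tau>_def)
    also have "\<dots> = real N * E t + real k * E r"
      using x by (simp add: sum.distrib sum.inter_filter[symmetric] Xset_def supp_def)
    finally show ?thesis
      using C by (simp add: mult_left_mono)
  qed
  show ?thesis
  proof (cases "Xset U k N = {}")
    case False
    have "(\<Sum>x\<in>Xset U k N. \<integral>w. sqnorm N (\<lambda>n. x n - est (\<lambda>i. x i + w i) n) \<partial>gauss_noise v N)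
        \<le> real (card (Xset U k N)) * (C * (real N * E t + real k * E r))"
      by (rule sum_bounded_above) (rule per_signal)
    then show ?thesis
      using bound_nonneg by (auto simp: mse_def E_def v_def divide_le_eq mult.commute)
  qed (use bound_nonneg in \<open>simp add: mse_def E_def\<close>)
qed

lemma mse_div_sparsity_le:
  fixes C t r \<theta> s2 :: real and k N :: nat
  defines "L \<equiv> ln (real N / real k)"
  assumes k: "1 \<le> k" "k < N" and s2: "0 < s2" and C: "0 \<le> C" and t: "0 \<le> t" and r: "0 \<le> r"
    and \<theta>: "0 < \<theta>" "\<theta> + 2 * s2 / L < 1"
    and mle: "is_ML_est U s2 k N est"
    and distortion: "\<And>x z w. x \<in> Xset U k N \<Longrightarrow> z \<in> Xset U k N \<Longrightarrow>
      sqnorm N (\<lambda>n. x n + w n - z n) \<le> sqnorm N w \<Longrightarrow>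
      sqnorm N (\<lambda>n. x n - z n) \<le> C * (\<Sum>n<N. tail_exp (if x n = 0 then t else r) (w n))"
  shows "mse U s2 k N est / real k \<le> C * (exp (- (\<theta> * t\<^sup>2 / (2 * s2) - 1) * L)
    + exp (- (\<theta> * r\<^sup>2 / (2 * s2)) * L)) / sqrt (1 - \<theta> - 2 * s2 / L)"
proof -
  have ratio: "1 < real N / real k" "0 < real k"
    using k by simp_all
  then have L: "0 < L"
    by (simp add: L_def)
  define v where "v = s2 / L"
  have v: "0 < v" "\<theta> + 2 * v < 1" "noise_var s2 k N = v"
    using s2 L \<theta> by (simp_all add: v_def noise_var_def L_def)
  define q where "q = sqrt (1 - \<theta> - 2 * v)"
  have q: "0 < q"
    using v by (simp add: q_def)
  have "mse U s2 k N est \<le> C * (real N * integral\<^sup>L (centered_normal v) (tail_exp t)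
      + real k * integral\<^sup>L (centered_normal v) (tail_exp r))"
    using mse_le_tail_expectations[of s2 k N C U est t r] v \<theta> C mle distortion by simp
  also have "\<dots> \<le> C * (real N * (exp (- \<theta> * t\<^sup>2 / (2 * v)) / q) + real k * (exp (- \<theta> * r\<^sup>2 / (2 * v)) / q))"
    unfolding q_def using tail_exp_expectation_le v \<theta> t r C
    by (intro mult_left_mono add_mono) simp_all
  also have "\<dots> = real k * (C * ((real N / real k) * exp (- \<theta> * t\<^sup>2 / (2 * v))
      + exp (- \<theta> * r\<^sup>2 / (2 * v))) / q)"
    using ratio q by (simp add: field_simps)
  also have "(real N / real k) * exp (- \<theta> * t\<^sup>2 / (2 * v)) = exp (- (\<theta> * t\<^sup>2 / (2 * s2) - 1) * L)"
  proof -
    have "L + - \<theta> * t\<^sup>2 / (2 * v) = - (\<theta> * t\<^sup>2 / (2 * s2) - 1) * L"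
      using L s2 by (simp add: v_def field_simps)
    moreover have "real N / real k = exp L"
      using ratio by (simp add: L_def)
    ultimately show ?thesis
      by (metis exp_add)
  qed
  also have "exp (- \<theta> * r\<^sup>2 / (2 * v)) = exp (- (\<theta> * r\<^sup>2 / (2 * s2)) * L)"
    using L s2 by (simp add: v_def field_simps)
  finally show ?thesis
    using ratio by (simp add: q_def v_def mult.commute divide_le_eq)
qed

section \<open>Asymptotics\<close>

lemma exp_decay_div_sqrt_tendsto_0:
  fixes a b c \<theta> C :: real
  assumes "0 < a" "0 < b" "\<theta> < 1"
  shows "((\<lambda>L. C * (exp (- a * L) + exp (- b * L)) / sqrt (1 - \<theta> - c / L)) \<longlongrightarrow> 0) at_top"
proof -
  have "((\<lambda>L. C * (exp (- a * L) + exp (- b * L)) / sqrt (1 - \<theta> - c / L))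
      \<longlongrightarrow> C * (0 + 0) / sqrt (1 - \<theta> - 0)) at_top"
    using assms
    by (intro tendsto_intros filterlim_compose[OF exp_at_bot] tendsto_divide_0[OF tendsto_const]
        filterlim_tendsto_neg_mult_at_bot[OF tendsto_const] filterlim_ident
        filterlim_at_top_imp_at_infinity)
       auto
  then show ?thesis
    by simp
qed

lemma mle_thresholds_exist:
  fixes s2 d \<delta> :: real
  assumes s2: "0 < s2" "2 * s2 < d\<^sup>2" and d: "0 < d" and \<delta>: "0 < \<delta>"
  obtains t r \<theta> where "0 \<le> t" "0 < r" "4 * r \<le> \<delta>" "t + r < d" "0 < \<theta>" "\<theta> < 1" "2 * s2 < \<theta> * t\<^sup>2"
proof -
  have "sqrt (2 * s2) < d"
    using real_sqrt_less_mono[OF s2(2)] d by simp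
  then obtain t where t: "sqrt (2 * s2) < t" "t < d"
    using dense by blast
  have "0 \<le> t"
    using t(1) real_sqrt_ge_zero[of "2 * s2"] s2 by linarith
  have "(sqrt (2 * s2))\<^sup>2 < t\<^sup>2"
    using t s2 by (intro power_strict_mono) auto
  then have "2 * s2 < t\<^sup>2"
    using s2 by simp
  then have "2 * s2 / t\<^sup>2 < 1"
    by (simp add: divide_less_eq)
  then obtain \<theta> where \<theta>: "2 * s2 / t\<^sup>2 < \<theta>" "\<theta> < 1"
    using dense by blast
  have "0 < t\<^sup>2"
    using \<open>2 * s2 < t\<^sup>2\<close> s2 by linarith
  then have "2 * s2 < \<theta> * t\<^sup>2"
    using \<theta> by (simp add: divide_less_eq)
  moreover have "0 < \<theta>"
    using \<theta> s2 \<open>0 < t\<^sup>2\<close> divide_pos_pos[of "2 * s2" "t\<^sup>2"] by linarith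
  moreover define r where "r = min ((d - t) / 2) (\<delta> / 4)"
  then have "0 < r" "4 * r \<le> \<delta>" "t + r < d"
    using t \<delta> by (auto simp: min_def field_simps)
  ultimately show thesis
    using that[of t r \<theta>] \<theta> \<open>0 \<le> t\<close> by blast
qed

lemma ln_ratio_tendsto_at_top:
  fixes k N :: "nat \<Rightarrow> nat"
  assumes kN: "\<And>j. 1 \<le> k j \<and> k j < N j" and N: "filterlim N at_top sequentially"
    and \<gamma>: "(\<lambda>j. ln (real (k j)) / ln (real (N j))) \<longlonglongrightarrow> \<gamma>" "\<gamma> < 1"
  shows "filterlim (\<lambda>j. ln (real (N j) / real (k j))) at_top sequentially"
proof -
  have "filterlim (\<lambda>j. ln (real (N j))) at_top sequentially"
    using filterlim_compose[OF ln_at_top filterlim_compose[OF filterlim_real_sequentially N]] .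
  then have "filterlim (\<lambda>j. (1 - ln (real (k j)) / ln (real (N j))) * ln (real (N j)))
      at_top sequentially"
    using \<gamma> by (intro filterlim_tendsto_pos_mult_at_top[where c = "1 - \<gamma>"] tendsto_intros) auto
  moreover have "(1 - ln (real (k j)) / ln (real (N j))) * ln (real (N j))
      = ln (real (N j) / real (k j))" for j
    using kN[of j] by (simp add: ln_div field_simps)
  ultimately show ?thesis
    by simp
qed

lemma finite_set_separated:
  fixes U :: "real set"
  assumes "finite U"
  obtains \<delta> where "0 < \<delta>" and "\<And>u u'. u \<in> U \<Longrightarrow> u' \<in> U \<Longrightarrow> u \<noteq> u' \<Longrightarrow> \<delta> \<le> \<bar>u - u'\<bar>"
proof -
  obtain \<delta> where "0 < \<delta>" and "\<forall>x\<in>(\<lambda>(u, u'). u - u') ` (U \<times> U). x \<noteq> 0 \<longrightarrow> \<delta> \<le> dist 0 x"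
    using finite_set_avoid[of "(\<lambda>(u, u'). u - u') ` (U \<times> U)" 0] assms by auto
  then show thesis
    by (intro that[of \<delta>]) (force simp: dist_real_def)+
qed

lemma mle_mse_div_sparsity_bound:
  fixes U :: "real set" and s2 :: real
  assumes U: "finite U" "U \<noteq> {}" "0 \<notin> U" and s2: "0 < s2" "s2 < (Min (abs ` U))\<^sup>2 / 2"
  obtains h L0 where "(h \<longlongrightarrow> 0) at_top"
    and "\<And>k N est. 1 \<le> k \<Longrightarrow> k < N \<Longrightarrow> L0 < ln (real N / real k) \<Longrightarrow> is_ML_est U s2 k N est \<Longrightarrow>
      mse U s2 k N est / real k \<le> h (ln (real N / real k))"
proof -
  define d where "d = Min (abs ` U)"
  define D where "D = Max (abs ` U)"
  have min_abs: "\<And>u. u \<in> U \<Longrightarrow> d \<le> \<bar>u\<bar>" and max_abs: "\<And>u. u \<in> U \<Longrightarrow> \<bar>u\<bar> \<le> D"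
    using U by (simp_all add: d_def D_def)
  have d: "0 < d"
    using U by (auto simp: d_def)
  obtain \<delta> where \<delta>: "0 < \<delta>"
    and separated: "\<And>u u'. u \<in> U \<Longrightarrow> u' \<in> U \<Longrightarrow> u \<noteq> u' \<Longrightarrow> \<delta> \<le> \<bar>u - u'\<bar>"
    using finite_set_separated[OF U(1)] by blast
  have "2 * s2 < d\<^sup>2"
    using s2(2) by (simp add: d_def)
  then obtain t r \<theta> where t: "0 \<le> t" and r: "0 < r" "4 * r \<le> \<delta>" and tr: "t + r < d"
    and \<theta>: "0 < \<theta>" "\<theta> < 1" "2 * s2 < \<theta> * t\<^sup>2"
    using mle_thresholds_exist[OF s2(1) _ d \<delta>] by blast
  define C where "C = (d\<^sup>2 + \<delta>\<^sup>2 + 1) * (D\<^sup>2 / (d * (d - t - r)) + 8 * D\<^sup>2 / \<delta>\<^sup>2)"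
  have C: "0 \<le> C"
    using t r tr by (simp add: C_def)
  have distortion: "sqnorm N (\<lambda>n. x n - z n) \<le> C * (\<Sum>n<N. tail_exp (if x n = 0 then t else r) (w n))"
    if "x \<in> Xset U k N" "z \<in> Xset U k N" "sqnorm N (\<lambda>n. x n + w n - z n) \<le> sqnorm N w" for k N x z w
    unfolding C_def
    by (rule mle_distortion_le_tail_sum[OF that(1,2) min_abs max_abs separated \<delta>
        less_imp_le[OF r(1)] r(2) t tr that(3)])
  show thesis
  proof (rule that)
    show "((\<lambda>L. C * (exp (- (\<theta> * t\<^sup>2 / (2 * s2) - 1) * L) + exp (- (\<theta> * r\<^sup>2 / (2 * s2)) * L))
        / sqrt (1 - \<theta> - 2 * s2 / L)) \<longlongrightarrow> 0) at_top"
      using s2 r \<theta> by (intro exp_decay_div_sqrt_tendsto_0) (simp_all add: field_simps)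
  next
    fix k N est
    assume k: "1 \<le> k" "k < N" and L: "2 * s2 / (1 - \<theta>) < ln (real N / real k)"
      and mle: "is_ML_est U s2 k N est"
    have "0 < ln (real N / real k)"
      using L divide_pos_pos[of "2 * s2" "1 - \<theta>"] s2 \<theta> by linarith
    then have "\<theta> + 2 * s2 / ln (real N / real k) < 1"
      using L \<theta> by (simp add: field_simps)
    then show "mse U s2 k N est / real k
        \<le> C * (exp (- (\<theta> * t\<^sup>2 / (2 * s2) - 1) * ln (real N / real k))
          + exp (- (\<theta> * r\<^sup>2 / (2 * s2)) * ln (real N / real k)))
          / sqrt (1 - \<theta> - 2 * s2 / ln (real N / real k))"
      by (rule mse_div_sparsity_le[OF k s2(1) C t less_imp_le[OF r(1)] \<theta>(1) _ mle distortion])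
  qed
qed

theorem theorem1:
  fixes U :: "real set" and s2 \<gamma> :: real
    and kk NN :: "nat \<Rightarrow> nat"
    and est :: "nat \<Rightarrow> (nat \<Rightarrow> real) \<Rightarrow> (nat \<Rightarrow> real)"
  assumes "finite U" and "U \<noteq> {}" and "0 \<notin> U"
    and "s2 > 0"
    and "s2 < (Min (abs ` U))\<^sup>2 / 2"
    and "0 \<le> \<gamma>" and "\<gamma> < 1"
    and "\<And>j. 1 \<le> kk j \<and> kk j < NN j"
    and "filterlim kk at_top sequentially"
    and "filterlim NN at_top sequentially"
    and "(\<lambda>j. ln (real (kk j)) / ln (real (NN j))) \<longlonglongrightarrow> \<gamma>"
    and "\<And>j. is_ML_est U s2 (kk j) (NN j) (est j)"
  shows "(\<lambda>j. mse U s2 (kk j) (NN j) (est j) / real (kk j)) \<longlonglongrightarrow> 0"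
proof -
  obtain h L0 where h: "(h \<longlongrightarrow> 0) at_top"
    and bound: "\<And>k N est. 1 \<le> k \<Longrightarrow> k < N \<Longrightarrow> L0 < ln (real N / real k) \<Longrightarrow>
      is_ML_est U s2 k N est \<Longrightarrow> mse U s2 k N est / real k \<le> h (ln (real N / real k))"
    using mle_mse_div_sparsity_bound[OF assms(1-5)] by blast
  define L where "L j = ln (real (NN j) / real (kk j))" for j
  have L: "filterlim L at_top sequentially"
    unfolding L_def using assms(8,10,11,7) by (rule ln_ratio_tendsto_at_top)
  then have "eventually (\<lambda>j. L0 < L j) sequentially"
    unfolding filterlim_at_top_dense by blast
  then have upper: "eventually (\<lambda>j. mse U s2 (kk j) (NN j) (est j) / real (kk j) \<le> h (L j)) sequentially"
  proof eventually_elim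
    case (elim j)
    show ?case
      unfolding L_def
      by (rule bound[OF _ _ _ assms(12)]) (use assms(8)[of j] elim in \<open>simp_all add: L_def\<close>)
  qed
  have nonneg: "eventually (\<lambda>j. 0 \<le> mse U s2 (kk j) (NN j) (est j) / real (kk j)) sequentially"
    by (simp add: mse_nonneg)
  show ?thesis
    by (rule tendsto_sandwich[OF nonneg upper tendsto_const filterlim_compose[OF h L]])
qed

end
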